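(* Let $r\ge1$ and let $\mathcal{R}$ be a Rouquier block of $\mathcal{A}_e^r$ which is not a core block. Let $(\boldsymbol\lambda,\mathbf{s})\in\mathcal{R}$ and write $\eta(\lambda^{(k)},s_k)=(\boldsymbol\rho^k,\mathbf{t}^k)$ for $1\le k\le r$. Then $\sum_{k=1}^r t^k_{i+1}-\sum_{k=1}^r t^k_i\ge0$ for all $0\le i<e-1$.
   Context: Fix an integer $e\ge 2$. A partition is a weakly decreasing sequence $\lambda=(\lambda_1,\lambda_2,\dots)$ of non-negative integers with finite sum $|\lambda|$; $\Lambda$ denotes the set of partitions and $\Lambda^{(m)}$ the set of $m$-multipartitions, i.e. $m$-tuples $\boldsymbol\lambda=(\lambda^{(1)},\dots,\lambda^{(m)})$ of partitions, with $|\boldsymbol\lambda|=\sum_k|\lambda^{(k)}|$. A $\beta$-set is a subset $B\subseteq\mathbb{Z}$ containing all sufficiently small integers and no sufficiently large ones. For $\lambda\in\Lambda$ and $s\in\mathbb{Z}$ set $B_s(\lambda)=\{\lambda_i-i+s : i\ge 1\}$; every $\beta$-set equals $B_s(\lambda)$ for a unique pair $(\lambda,s)$. Let $\mathcal{A}_e=\Lambda\times\mathbb{Z}$ (abacus configurations with $e$ runners) and $\mathcal{A}_e^m=\Lambda^{(m)}\times\mathbb{Z}^m$. Blocks: for $(\boldsymbol\lambda,\mathbf{s})\in\mathcal{A}_e^m$, its $e$-residue multiset is the multiset of the values $s_k+y-x \bmod e$ over all nodes $(x,y,k)$ with $x\ge1$, $1\le y\le\lambda^{(k)}_x$, $1\le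 k\le m$. Define $(\boldsymbol\lambda,\mathbf{s})\approx_e(\boldsymbol\mu,\mathbf{s}')$ iff $\mathbf{s}=\mathbf{s}'$, $|\boldsymbol\lambda|=|\boldsymbol\mu|$ and the $e$-residue multisets coincide. Its equivalence classes are called blocks. The map $\eta$: for $(\lambda,s)\in\mathcal{A}_e$ with $B=B_s(\lambda)$ and $0\le i<e$, the set $C_i=\{(b-i)/e : b\in B,\ b\equiv i \bmod e\}$ is a $\beta$-set, so $C_i=B_{t_i}(\rho_i)$ for a unique $(\rho_i,t_i)\in\Lambda\times\mathbb{Z}$; set $\eta(\lambda,s)=((\rho_0,\dots,\rho_{e-1}),(t_0,\dots,t_{e-1}))$. The $e$-weight of $\lambda$ is $\mathrm{wt}(\lambda)=\sum_i|\rho_i|$ (it is positive iff $\lambda$ has a removable $e$-rim hook). Rouquier: $(\lambda,s)\in\mathcal{A}_e$ with $\eta(\lambda,s)=(\boldsymbol\rho,\mathbf{t})$ is a Rouquier partition if $\mathrm{wt}(\lambda)\le t_{i+1}-t_i+1$ for all $0\le i<e-1$. $(\boldsymbol\lambda,\mathbf{s})\in\mathcal{A}_e^r$ is a Rouquier multipartition if $(\lambda^{(k)},s_k)$ is a Rouquier partition for every $1\le k\le r$. A block of $\mathcal{A}_e^r$ is a Rouquier block if all its elements are Rouquier multipartitions. A block $\mathcal{R}$ of $\mathcal{A}_e^r$ is a core block if for every $(\boldsymbol\lambda,\mathbf{s})\in\mathcal{R}$ every component $\lambda^{(k)}$ has $e$-weight $0$ (no removable $e$-rim hooks). *)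

theory Defs
  imports Main "HOL-Library.Multiset"
begin

text \<open>Partitions: weakly decreasing lists of positive naturals (trailing zeros omitted).
  The i-th part (i \<ge> 1) is part lam i, which is 0 beyond the length.\<close>

definition is_partition :: "nat list \<Rightarrow> bool" where
  "is_partition lam \<longleftrightarrow> sorted_wrt (\<ge>) lam \<and> 0 \<notin> set lam"

definition part :: "nat list \<Rightarrow> nat \<Rightarrow> nat" where
  "part lam i = (if 1 \<le> i \<and> i \<le> length lam then lam ! (i - 1) else 0)"

definition psize :: "nat list \<Rightarrow> nat" where
  "psize lam = sum_list lam"

definition beta_set :: "int \<Rightarrow> nat list \<Rightarrow> int set" where
  "beta_set s lam = {int (part lam i) - int i + s | i. 1 \<le> i}"

definition runner :: "nat \<Rightarrow> int set \<Rightarrow> nat \<Rightarrow> int set" where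
  "runner e B i = {(b - int i) div int e | b. b \<in> B \<and> b mod int e = int i}"

text \<open>eta(lambda,s) = ((rho_0,...,rho_{e-1}),(t_0,...,t_{e-1})), where
  C_i = B_{t_i}(rho_i) for the unique pair (rho_i,t_i).\<close>
definition eta_pair :: "nat \<Rightarrow> nat list \<Rightarrow> int \<Rightarrow> nat \<Rightarrow> nat list \<times> int" where
  "eta_pair e lam s i =
     (THE (rho, t). is_partition rho \<and> runner e (beta_set s lam) i = beta_set t rho)"

definition eta_rho :: "nat \<Rightarrow> nat list \<Rightarrow> int \<Rightarrow> nat \<Rightarrow> nat list" where
  "eta_rho e lam s i = fst (eta_pair e lam s i)"

definition eta_t :: "nat \<Rightarrow> nat list \<Rightarrow> int \<Rightarrow> nat \<Rightarrow> int" where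
  "eta_t e lam s i = snd (eta_pair e lam s i)"

text \<open>e-weight wt(lambda) = sum_i |rho_i| (computed from eta(lambda,s); independent of s).\<close>
definition e_weight :: "nat \<Rightarrow> nat list \<Rightarrow> int \<Rightarrow> nat" where
  "e_weight e lam s = (\<Sum>i<e. psize (eta_rho e lam s i))"

text \<open>m-multipartitions with charges: lists of length m (component k is index k-1).\<close>
definition config :: "nat \<Rightarrow> (nat list list \<times> int list) set" where
  "config m = {(L, S). length L = m \<and> length S = m \<and> (\<forall>lam \<in> set L. is_partition lam)}"

definition mpsize :: "nat list list \<Rightarrow> nat" where
  "mpsize L = (\<Sum>lam \<leftarrow> L. psize lam)"

definition nodes :: "nat list \<Rightarrow> (nat \<times> nat) set" where
  "nodes lam = {(x, y). 1 \<le> x \<and> 1 \<le> y \<and> y \<le> part lam x}"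

definition residues :: "nat \<Rightarrow> int \<Rightarrow> nat list \<Rightarrow> int multiset" where
  "residues e s lam = image_mset (\<lambda>(x, y). (s + int y - int x) mod int e) (mset_set (nodes lam))"

definition mresidues :: "nat \<Rightarrow> nat list list \<times> int list \<Rightarrow> int multiset" where
  "mresidues e c = (\<Sum>(lam, s) \<leftarrow> zip (fst c) (snd c). residues e s lam)"

definition block_eq :: "nat \<Rightarrow> nat list list \<times> int list \<Rightarrow> nat list list \<times> int list \<Rightarrow> bool" where
  "block_eq e c d \<longleftrightarrow> snd c = snd d \<and> mpsize (fst c) = mpsize (fst d) \<and> mresidues e c = mresidues e d"

definition is_block :: "nat \<Rightarrow> nat \<Rightarrow> (nat list list \<times> int list) set \<Rightarrow> bool" where
  "is_block e m R \<longleftrightarrow> (\<exists>c0 \<in> config m. R = {c \<in> config m. block_eq e c0 c})"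

definition rouquier_partition :: "nat \<Rightarrow> nat list \<Rightarrow> int \<Rightarrow> bool" where
  "rouquier_partition e lam s \<longleftrightarrow>
     (\<forall>i. i + 1 < e \<longrightarrow> int (e_weight e lam s) \<le> eta_t e lam s (i + 1) - eta_t e lam s i + 1)"

definition rouquier_multipartition :: "nat \<Rightarrow> nat list list \<times> int list \<Rightarrow> bool" where
  "rouquier_multipartition e c \<longleftrightarrow>
     (\<forall>k < length (fst c). rouquier_partition e (fst c ! k) (snd c ! k))"

definition rouquier_block :: "nat \<Rightarrow> nat \<Rightarrow> (nat list list \<times> int list) set \<Rightarrow> bool" where
  "rouquier_block e m R \<longleftrightarrow> is_block e m R \<and> (\<forall>c \<in> R. rouquier_multipartition e c)"

definition core_block :: "nat \<Rightarrow> nat \<Rightarrow> (nat list list \<times> int list) set \<Rightarrow> bool" where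
  "core_block e m R \<longleftrightarrow> is_block e m R \<and>
     (\<forall>c \<in> R. \<forall>k < length (fst c). e_weight e (fst c ! k) (snd c ! k) = 0)"

end

theory Submission
  imports Defs
begin

text \<open>Counting beads on the \<open>e\<close>-abacus shows that the charge \<open>t\<^sub>a\<close> of runner \<open>a\<close> equals its value
  for the empty partition plus the number of nodes of residue \<open>a\<close> minus the number of nodes of
  residue \<open>a + 1\<close>. Hence \<open>\<Sum>\<^sub>k t\<^sup>k\<^sub>a\<close> depends only on the charges and the residue multiset, so it is
  constant on a block and the inequality need only be checked for one element. As the block is
  not a core block, some element has a component \<open>j\<close> of positive weight. Removing an \<open>e\<close>-rim
  hook from component \<open>j\<close> and adding one to the first row of any other component \<open>k\<close> stays in
  the block, keeps the runner charges of component \<open>k\<close> and gives it positive weight; the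
  Rouquier condition then yields \<open>t\<^sup>k\<^sub>i\<^sub>+\<^sub>1 - t\<^sup>k\<^sub>i \<ge> wt - 1 \<ge> 0\<close> for every \<open>k\<close>.\<close>

section \<open>Beta-numbers\<close>

definition beta_num :: "int \<Rightarrow> nat list \<Rightarrow> nat \<Rightarrow> int" where
  "beta_num s lam x = int (part lam x) - int x + s"

lemma beta_set_eq_image: "beta_set s lam = beta_num s lam ` {1..}"
  unfolding beta_set_def beta_num_def by auto

lemma part_ge_1:
  assumes "is_partition lam" "1 \<le> x" "x \<le> length lam" shows "1 \<le> part lam x"
proof -
  have "lam ! (x - 1) \<in> set lam" using assms by (intro nth_mem) linarith
  then have "lam ! (x - 1) \<noteq> 0" using assms(1) unfolding is_partition_def by metis
  then show ?thesis using assms unfolding part_def by simp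
qed

lemma part_beyond_length: "length lam < x \<Longrightarrow> part lam x = 0"
  unfolding part_def by auto

lemma part_antimono:
  assumes "is_partition lam" "1 \<le> x" "x \<le> y" shows "part lam y \<le> part lam x"
proof (cases "y \<le> length lam")
  case True
  then show ?thesis using assms unfolding part_def is_partition_def
    by (cases "x = y") (auto simp: sorted_wrt_iff_nth_less)
qed (simp add: part_beyond_length)

lemma part_1_ge: "is_partition lam \<Longrightarrow> y \<in> set lam \<Longrightarrow> y \<le> part lam 1"
proof -
  assume p: "is_partition lam" and "y \<in> set lam"
  then obtain i where i: "i < length lam" "lam ! i = y" by (meson in_set_conv_nth)
  then have "part lam (Suc i) = y" unfolding part_def by simp
  then show ?thesis using part_antimono[OF p, of 1 "Suc i"] by simp
qed

lemma partition_eqI: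
  assumes p1: "is_partition r1" and p2: "is_partition r2"
    and eq: "\<And>x. 1 \<le> x \<Longrightarrow> part r1 x = part r2 x"
  shows "r1 = r2"
proof -
  have "\<not> length r1 < length r2" if "is_partition r2" "\<And>x. 1 \<le> x \<Longrightarrow> part r1 x = part r2 x"
    for r1 r2 :: "nat list"
    using part_ge_1[OF that(1), of "length r2"] part_beyond_length[of r1 "length r2"]
      that(2)[of "length r2"] by auto
  then have len: "length r1 = length r2" using p1 p2 eq by (metis linorder_neqE_nat)
  show ?thesis
  proof (rule nth_equalityI[OF len])
    fix i assume "i < length r1"
    then show "r1 ! i = r2 ! i" using eq[of "Suc i"] len unfolding part_def by simp
  qed
qed

lemma beta_num_strict_antimono:
  "is_partition lam \<Longrightarrow> 1 \<le> x \<Longrightarrow> x < y \<Longrightarrow> beta_num s lam y < beta_num s lam x"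
  using part_antimono[of lam x y] unfolding beta_num_def by force

lemma beta_num_less_iff:
  assumes "is_partition lam" "1 \<le> x" "1 \<le> y"
  shows "beta_num s lam y < beta_num s lam x \<longleftrightarrow> x < y"
  using beta_num_strict_antimono[OF assms(1)] assms
  by (metis less_asym linorder_neqE_nat)

lemma inj_on_beta_num: "is_partition lam \<Longrightarrow> inj_on (beta_num s lam) {1..}"
  by (rule inj_onI) (metis atLeast_iff beta_num_strict_antimono less_irrefl linorder_neqE_nat)

lemma beta_num_beyond_length: "length lam < x \<Longrightarrow> beta_num s lam x = s - int x"
  unfolding beta_num_def by (simp add: part_beyond_length)

lemma beta_num_ge: "s - int x \<le> beta_num s lam x"
  unfolding beta_num_def by simp

lemma beta_set_le_first: "is_partition lam \<Longrightarrow> b \<in> beta_set s lam \<Longrightarrow> b \<le> beta_num s lam 1"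
  unfolding beta_set_eq_image
  by (metis atLeast_iff beta_num_strict_antimono imageE le_less linorder_neqE_nat not_less)

lemma mem_beta_set_below: "n < s - int (length lam) \<Longrightarrow> n \<in> beta_set s lam"
  unfolding beta_set_eq_image
  by (rule image_eqI[where x = "nat (s - n)"]) (use beta_num_beyond_length[of lam "nat (s - n)" s] in auto)

lemma beta_set_ge_eq_image:
  assumes "T \<le> s - int (length lam)"
  shows "{c \<in> beta_set s lam. T \<le> c} = beta_num s lam ` {1..nat (s - T)}"
proof (intro equalityI subsetI)
  fix c assume "c \<in> {c \<in> beta_set s lam. T \<le> c}"
  then obtain x where x: "1 \<le> x" "c = beta_num s lam x" "T \<le> c"
    unfolding beta_set_eq_image by auto
  have "x \<le> nat (s - T)"
    using beta_num_beyond_length[of lam x s] x assms by (cases "length lam < x") auto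
  then show "c \<in> beta_num s lam ` {1..nat (s - T)}" using x by auto
next
  fix c assume "c \<in> beta_num s lam ` {1..nat (s - T)}"
  then obtain x where x: "1 \<le> x" "x \<le> nat (s - T)" "c = beta_num s lam x" by auto
  then have "T \<le> c" using beta_num_ge[of s x lam] assms by linarith
  then show "c \<in> {c \<in> beta_set s lam. T \<le> c}" using x unfolding beta_set_eq_image by auto
qed

lemma finite_beta_set_ge: "finite {c \<in> beta_set s lam. T \<le> c}"
proof -
  have "{c \<in> beta_set s lam. T \<le> c} \<subseteq> {c \<in> beta_set s lam. min T (s - int (length lam)) \<le> c}"
    by auto
  then show ?thesis using beta_set_ge_eq_image[of "min T (s - int (length lam))" s lam]
    by (simp add: finite_subset)
qed

lemma length_not_mem_beta_set: "is_partition lam \<Longrightarrow> s - int (length lam) \<notin> beta_set s lam"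
proof
  assume p: "is_partition lam" and "s - int (length lam) \<in> beta_set s lam"
  then obtain x where x: "1 \<le> x" "s - int (length lam) = beta_num s lam x"
    unfolding beta_set_eq_image by auto
  show False
  proof (cases "x \<le> length lam")
    case True
    then show ?thesis using part_ge_1[OF p x(1) True] x unfolding beta_num_def by linarith
  qed (use x beta_num_beyond_length[of lam x s] in simp)
qed

lemma card_beta_set_ge:
  assumes p: "is_partition rho" and full: "\<forall>n<N. n \<in> beta_set t rho"
  shows "N \<le> t - int (length rho)" and "card {c \<in> beta_set t rho. N \<le> c} = nat (t - N)"
proof -
  show N: "N \<le> t - int (length rho)"
    using length_not_mem_beta_set[OF p, of t] full by force
  have "inj_on (beta_num t rho) {1..nat (t - N)}"
    using inj_on_beta_num[OF p] by (rule inj_on_subset) auto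
  then show "card {c \<in> beta_set t rho. N \<le> c} = nat (t - N)"
    unfolding beta_set_ge_eq_image[OF N] by (simp add: card_image)
qed

lemma beta_set_greater_num:
  assumes p: "is_partition lam" and x: "1 \<le> x"
  shows "{c \<in> beta_set s lam. beta_num s lam x < c} = beta_num s lam ` {1..<x}"
  using beta_num_less_iff[OF p _ x, of _ s] x unfolding beta_set_eq_image by auto

lemma card_beta_set_greater_num:
  assumes p: "is_partition lam" and x: "1 \<le> x"
  shows "card {c \<in> beta_set s lam. beta_num s lam x < c} = x - 1"
proof -
  have "inj_on (beta_num s lam) {1..<x}" using inj_on_beta_num[OF p] by (rule inj_on_subset) auto
  then show ?thesis unfolding beta_set_greater_num[OF p x] by (simp add: card_image)
qed

lemma is_partition_Nil: "is_partition []"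
  unfolding is_partition_def by simp

lemma beta_set_Nil: "beta_set t [] = {n. n < t}"
proof -
  have "beta_num t [] x = t - int x" for x unfolding beta_num_def part_def by simp
  then have "beta_set t [] = (\<lambda>x. t - int x) ` {1..}" unfolding beta_set_eq_image by simp
  also have "\<dots> = {n. n < t}"
    by (auto intro!: image_eqI[where x = "nat (t - _)"])
  finally show ?thesis .
qed

lemma beta_set_Cons: "beta_set (t + 1) (m # rho) = insert (int m + t) (beta_set t rho)"
proof -
  have U: "{1::nat..} = insert 1 (Suc ` {1..})"
  proof (intro equalityI subsetI)
    fix x :: nat assume "x \<in> {1..}"
    then show "x \<in> insert 1 (Suc ` {1..})"
      by (cases "x = 1") (auto intro!: image_eqI[where x = "x - 1"])
  qed auto
  have first: "beta_num (t + 1) (m # rho) 1 = int m + t"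
    unfolding beta_num_def part_def by simp
  have "beta_num (t + 1) (m # rho) (Suc x) = beta_num t rho x" if "1 \<le> x" for x
    using that unfolding beta_num_def part_def by (cases x) simp_all
  then have shifted: "beta_num (t + 1) (m # rho) ` Suc ` {1..} = beta_num t rho ` {1..}"
    unfolding image_image by (intro image_cong) auto
  have "beta_num (t + 1) (m # rho) ` {1..} = beta_num (t + 1) (m # rho) ` insert 1 (Suc ` {1..})"
    using U by (rule arg_cong)
  also have "\<dots> = insert (int m + t) (beta_num t rho ` {1..})"
    unfolding image_insert first shifted ..
  finally show ?thesis unfolding beta_set_eq_image .
qed

lemma beta_set_insert_above:
  assumes p: "is_partition rho" and above: "\<forall>c \<in> beta_set t rho. c < m"
  shows "\<exists>rho' t'. is_partition rho' \<and> insert m (beta_set t rho) = beta_set t' rho'"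
proof -
  have "beta_num t rho 1 \<in> beta_set t rho" unfolding beta_set_eq_image by auto
  then have first: "int (part rho 1) - 1 + t < m" using above unfolding beta_num_def by auto
  show ?thesis
  proof (cases "m \<le> t")
    case True
    then have "rho = []" using first part_ge_1[OF p, of 1] by (cases rho) auto
    moreover from this have "m = t" using first True unfolding part_def by simp
    ultimately have "insert m (beta_set t rho) = beta_set (t + 1) []"
      by (auto simp: beta_set_Nil)
    then show ?thesis using is_partition_Nil by blast
  next
    case False
    define mu where "mu = nat (m - t)"
    have mu: "int mu = m - t" "0 < mu" using False unfolding mu_def by auto
    have "\<forall>y \<in> set rho. y \<le> mu" using part_1_ge[OF p] first mu by force
    then have "is_partition (mu # rho)" using p mu unfolding is_partition_def by auto
    moreover have "insert m (beta_set t rho) = beta_set (t + 1) (mu # rho)"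
      unfolding beta_set_Cons using mu by simp
    ultimately show ?thesis by blast
  qed
qed

text \<open>The hypotheses say that \<open>C\<close> is a beta-set in the sense of the paper.\<close>
lemma beta_set_exists:
  assumes "\<forall>n<N. n \<in> C" and "finite {c \<in> C. N \<le> c}"
  shows "\<exists>rho t. is_partition rho \<and> C = beta_set t rho"
  using assms
proof (induction "card {c \<in> C. N \<le> c}" arbitrary: C)
  case 0
  then have "C = {n. n < N}" by force
  then show ?case using is_partition_Nil beta_set_Nil by metis
next
  case (Suc k)
  define m where "m = Max {c \<in> C. N \<le> c}"
  have ne: "{c \<in> C. N \<le> c} \<noteq> {}" using Suc.hyps(2) by (metis card.empty Zero_not_Suc)
  have m: "m \<in> C" "N \<le> m" using Max_in[OF Suc.prems(2) ne] unfolding m_def by auto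
  have "{c \<in> C - {m}. N \<le> c} = {c \<in> C. N \<le> c} - {m}" by auto
  then have "card {c \<in> C - {m}. N \<le> c} = k"
    using Suc.hyps(2) Suc.prems(2) m by (simp add: card_Diff_singleton)
  moreover have "\<forall>n<N. n \<in> C - {m}" "finite {c \<in> C - {m}. N \<le> c}"
    using Suc.prems m by (auto intro: finite_subset[OF _ Suc.prems(2)])
  ultimately obtain rho t where rt: "is_partition rho" "C - {m} = beta_set t rho"
    using Suc.hyps(1) by blast
  have "c < m" if "c \<in> beta_set t rho" for c
  proof -
    have "c \<in> C" "c \<noteq> m" using that rt(2) by auto
    then show ?thesis using Max_ge[OF Suc.prems(2), of c] m(2) unfolding m_def by force
  qed
  moreover have "C = insert m (beta_set t rho)" using rt(2) m by auto
  ultimately show ?case using beta_set_insert_above[OF rt(1)] by auto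
qed

lemma beta_set_unique:
  assumes p1: "is_partition r1" and p2: "is_partition r2"
    and eq: "beta_set t1 r1 = beta_set t2 r2"
  shows "r1 = r2 \<and> t1 = t2"
proof -
  define N where "N = min (t1 - int (length r1)) (t2 - int (length r2))"
  have "\<forall>n<N. n \<in> beta_set t1 r1" "\<forall>n<N. n \<in> beta_set t2 r2"
    using mem_beta_set_below unfolding N_def by auto
  then have "nat (t1 - N) = nat (t2 - N)"
    using card_beta_set_ge(2)[OF p1] card_beta_set_ge(2)[OF p2] eq by metis
  moreover have "N \<le> t1" "N \<le> t2" unfolding N_def by auto
  ultimately have t: "t1 = t2" by simp
  have "part r1 x = part r2 x" if x: "1 \<le> x" for x
  proof -
    have "beta_num t1 r1 x \<in> beta_set t2 r2" using eq x unfolding beta_set_eq_image by auto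
    then obtain y where y: "1 \<le> y" "beta_num t1 r1 x = beta_num t2 r2 y"
      unfolding beta_set_eq_image by auto
    have "x = y"
      using card_beta_set_greater_num[OF p1 x, of t1] card_beta_set_greater_num[OF p2 y(1), of t2]
        eq y(2) x y(1) by simp
    then show ?thesis using y(2) t unfolding beta_num_def by simp
  qed
  then show ?thesis using partition_eqI[OF p1 p2] t by simp
qed

section \<open>Runners\<close>

lemma ex_multiple_le: "0 < e \<Longrightarrow> \<exists>N::int. int e * N \<le> X"
proof
  assume "0 < e"
  then have "int e * - \<bar>X\<bar> \<le> 1 * - \<bar>X\<bar>" by (intro mult_right_mono_neg) auto
  then show "int e * - \<bar>X\<bar> \<le> X" by linarith
qed

lemma mem_runner_iff:
  assumes e: "0 < e" and i: "i < e"
  shows "c \<in> runner e B i \<longleftrightarrow> int e * c + int i \<in> B"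
proof
  assume "c \<in> runner e B i"
  then obtain b where b: "b \<in> B" "b mod int e = int i" "c = (b - int i) div int e"
    unfolding runner_def by auto
  have bi: "b - int i = int e * (b div int e)" using b(2) mult_div_mod_eq[of "int e" b] by simp
  then have "c = b div int e" using b(3) e by simp
  then show "int e * c + int i \<in> B" using b(1) bi by (metis diff_add_cancel)
next
  assume "int e * c + int i \<in> B"
  moreover have "(int e * c + int i) mod int e = int i" using e i by simp
  moreover have "(int e * c + int i - int i) div int e = c" using e by simp
  ultimately show "c \<in> runner e B i" unfolding runner_def by force
qed

lemma mem_runner_below:
  assumes e: "0 < e" and i: "i < e" and N: "int e * N + int i \<le> s - int (length lam)"
  shows "\<forall>n<N. n \<in> runner e (beta_set s lam) i"
proof (intro allI impI)
  fix n assume "n < N"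
  then have "int e * n < int e * N" using e by simp
  then have "int e * n + int i < s - int (length lam)" using N by linarith
  then show "n \<in> runner e (beta_set s lam) i"
    unfolding mem_runner_iff[OF e i] by (rule mem_beta_set_below)
qed

lemma finite_runner_ge:
  assumes p: "is_partition lam" and e: "0 < e" and i: "i < e"
  shows "finite {c \<in> runner e (beta_set s lam) i. N \<le> c}"
proof (rule finite_subset)
  show "{c \<in> runner e (beta_set s lam) i. N \<le> c} \<subseteq> {N..max 0 (beta_num s lam 1)}"
  proof
    fix c assume c: "c \<in> {c \<in> runner e (beta_set s lam) i. N \<le> c}"
    then have "int e * c + int i \<le> beta_num s lam 1"
      using beta_set_le_first[OF p] mem_runner_iff[OF e i] by blast
    moreover have "c \<le> int e * c" if "0 \<le> c" using e that by (simp add: mult_le_cancel_right1)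
    ultimately show "c \<in> {N..max 0 (beta_num s lam 1)}" using c by fastforce
  qed
qed simp

lemma eta_spec:
  assumes p: "is_partition lam" and e: "0 < e" and i: "i < e"
  shows "is_partition (eta_rho e lam s i)"
    and "runner e (beta_set s lam) i = beta_set (eta_t e lam s i) (eta_rho e lam s i)"
proof -
  obtain N where "int e * N \<le> s - int (length lam) - int i" using ex_multiple_le[OF e] by blast
  then have N: "int e * N + int i \<le> s - int (length lam)" by linarith
  obtain rho t where rt: "is_partition rho" "runner e (beta_set s lam) i = beta_set t rho"
    using beta_set_exists[OF mem_runner_below[OF e i N] finite_runner_ge[OF p e i]] by blast
  have "eta_pair e lam s i = (rho, t)"
    unfolding eta_pair_def
    by (rule the_equality) (use rt beta_set_unique in fastforce)+
  then show "is_partition (eta_rho e lam s i)"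
    and "runner e (beta_set s lam) i = beta_set (eta_t e lam s i) (eta_rho e lam s i)"
    using rt unfolding eta_rho_def eta_t_def by simp_all
qed

lemma eta_t_eq_card:
  assumes p: "is_partition lam" and e: "0 < e" and a: "a < e"
    and N: "int e * N + int a \<le> s - int (length lam)"
  shows "eta_t e lam s a = N + int (card {b \<in> beta_set s lam. int e * N \<le> b \<and> b mod int e = int a})"
proof -
  let ?R = "runner e (beta_set s lam) a"
  have full: "\<forall>n<N. n \<in> beta_set (eta_t e lam s a) (eta_rho e lam s a)"
    using mem_runner_below[OF e a N] eta_spec(2)[OF p e a] by simp
  note charge = card_beta_set_ge[OF eta_spec(1)[OF p e a] full]
  have "card {c \<in> ?R. N \<le> c} = nat (eta_t e lam s a - N)"
    using charge(2) eta_spec(2)[OF p e a] by simp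
  moreover have "N \<le> eta_t e lam s a" using charge(1) by linarith
  ultimately have card: "int (card {c \<in> ?R. N \<le> c}) = eta_t e lam s a - N" by simp
  have "inj_on (\<lambda>c. int e * c + int a) {c \<in> ?R. N \<le> c}"
    unfolding inj_on_def using e by simp
  moreover have "(\<lambda>c. int e * c + int a) ` {c \<in> ?R. N \<le> c}
      = {b \<in> beta_set s lam. int e * N \<le> b \<and> b mod int e = int a}"
  proof (intro equalityI subsetI)
    fix b assume "b \<in> (\<lambda>c. int e * c + int a) ` {c \<in> ?R. N \<le> c}"
    then obtain c where c: "c \<in> ?R" "N \<le> c" "b = int e * c + int a" by auto
    have "int e * N \<le> int e * c" using c(2) e by simp
    then have "int e * N \<le> b" using c(3) by linarith
    then show "b \<in> {b \<in> beta_set s lam. int e * N \<le> b \<and> b mod int e = int a}"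
      using c mem_runner_iff[OF e a] e a by auto
  next
    fix b assume b: "b \<in> {b \<in> beta_set s lam. int e * N \<le> b \<and> b mod int e = int a}"
    then have "b = int e * (b div int e) + int a" using mult_div_mod_eq[of "int e" b] by simp
    moreover have "N \<le> b div int e"
      using zdiv_mono1[of "int e * N" b "int e"] b e by simp
    ultimately show "b \<in> (\<lambda>c. int e * c + int a) ` {c \<in> ?R. N \<le> c}"
      using b mem_runner_iff[OF e a, of "b div int e"] by (intro image_eqI[where x = "b div int e"]) auto
  qed
  ultimately show ?thesis using card by (simp add: card_image[symmetric])
qed

section \<open>Residues and runner charges\<close>

definition residue_count :: "nat \<Rightarrow> int \<Rightarrow> int \<Rightarrow> int \<Rightarrow> int" where
  "residue_count e T a m = int (card {n \<in> {T..m}. n mod int e = a})"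

lemma residue_count_diff_eq_card:
  assumes "T \<le> c + 1" and "c \<le> m"
  shows "residue_count e T a m - residue_count e T a c = int (card {n \<in> {c<..m}. n mod int e = a})"
proof -
  have "{n \<in> {T..m}. n mod int e = a}
      = {n \<in> {T..c}. n mod int e = a} \<union> {n \<in> {c<..m}. n mod int e = a}"
    using assms by auto
  moreover have "card ({n \<in> {T..c}. n mod int e = a} \<union> {n \<in> {c<..m}. n mod int e = a})
      = card {n \<in> {T..c}. n mod int e = a} + card {n \<in> {c<..m}. n mod int e = a}"
    by (rule card_Un_disjoint)
      (auto intro: finite_subset[of _ "{T..c}"] finite_subset[of _ "{c<..m}"])
  ultimately show ?thesis unfolding residue_count_def by simp
qed

lemma residue_count_below: "residue_count e T a (T - 1) = 0"
  unfolding residue_count_def by simp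

lemma residue_count_succ:
  assumes "T \<le> m + 1"
  shows "residue_count e T a (m + 1) = residue_count e T a m + (if (m + 1) mod int e = a then 1 else 0)"
proof -
  have "{m<..m + 1} = {m + 1}" by auto
  then have "{n \<in> {m<..m + 1}. n mod int e = a} = (if (m + 1) mod int e = a then {m + 1} else {})"
    by auto
  then have card: "int (card {n \<in> {m<..m + 1}. n mod int e = a}) = (if (m + 1) mod int e = a then 1 else 0)"
    by simp
  have "residue_count e T a (m + 1) - residue_count e T a m = int (card {n \<in> {m<..m + 1}. n mod int e = a})"
    by (rule residue_count_diff_eq_card) (use assms in auto)
  then show ?thesis unfolding card by simp
qed

lemma card_residue_class_window:
  assumes e: "0 < e"
  shows "card {n \<in> {b<..b + int e}. n mod int e = a} = (if 0 \<le> a \<and> a < int e then 1 else 0)"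
proof (cases "0 \<le> a \<and> a < int e")
  case True
  define w where "w = b + 1 + (a - b - 1) mod int e"
  have "{n \<in> {b<..b + int e}. n mod int e = a} = {w}"
  proof (intro equalityI subsetI)
    fix n assume n: "n \<in> {n \<in> {b<..b + int e}. n mod int e = a}"
    then have "(n - b - 1) mod int e = n - b - 1" by simp
    moreover have "(n - b - 1) mod int e = (a - b - 1) mod int e"
      using n by (metis (mono_tags, lifting) mem_Collect_eq mod_diff_left_eq)
    ultimately show "n \<in> {w}" unfolding w_def by simp
  next
    fix n assume "n \<in> {w}"
    moreover have "w mod int e = a"
      using True unfolding w_def by (metis add.commute diff_add_cancel diff_diff_eq mod_add_right_eq
          mod_pos_pos_trivial)
    moreover have "b < w" "w \<le> b + int e"
      using e pos_mod_bound[of "int e" "a - b - 1"] pos_mod_sign[of "int e" "a - b - 1"]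
      unfolding w_def by linarith+
    ultimately show "n \<in> {n \<in> {b<..b + int e}. n mod int e = a}" by simp
  qed
  then show ?thesis using True by simp
next
  case False
  then have "n mod int e \<noteq> a" for n using e pos_mod_bound pos_mod_sign by fastforce
  then show ?thesis using False by simp
qed

lemma residue_count_add_modulus:
  assumes "0 < e" and "T \<le> b + 1"
  shows "residue_count e T a (b + int e)
       = residue_count e T a b + (if 0 \<le> a \<and> a < int e then 1 else 0)"
  using residue_count_diff_eq_card[of T b "b + int e" e a] assms
    card_residue_class_window[OF assms(1), of b a] by (cases "0 \<le> a \<and> a < int e") simp_all

lemma residue_count_diff_next:
  assumes e: "0 < e" and a: "a < e" and T: "T mod int e = 0" and m: "T - 1 \<le> m"
  shows "residue_count e T (int a) m - residue_count e T (int ((a + 1) mod e)) m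
       = (if m mod int e = int a then 1 else 0) - (if a = e - 1 then 1 else 0)"
  using m
proof (induction m rule: int_ge_induct)
  case base
  have "(T - 1) mod int e = (T mod int e - 1) mod int e" by (simp add: mod_diff_left_eq)
  also have "\<dots> = int e - 1" using T e by (simp add: zmod_minus1)
  finally have "(T - 1) mod int e = int e - 1" .
  then have "(T - 1) mod int e = int a \<longleftrightarrow> a = e - 1" using a by auto
  then show ?case using residue_count_below by simp
next
  case (step m)
  have "int ((a + 1) mod e) = (int a + 1) mod int e" by (simp add: of_nat_mod add.commute)
  then have "(m + 1) mod int e = int ((a + 1) mod e) \<longleftrightarrow> m mod int e = int a mod int e"
    by (simp add: mod_eq_dvd_iff)
  then have "(m + 1) mod int e = int ((a + 1) mod e) \<longleftrightarrow> m mod int e = int a" using a by simp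
  then show ?case
    using residue_count_succ[of T m e "int a"] residue_count_succ[of T m e "int ((a + 1) mod e)"]
      step by (simp split: if_splits)
qed

lemma nodes_eq_Sigma:
  assumes "length lam \<le> X"
  shows "nodes lam = Sigma {1..X} (\<lambda>x. {1..part lam x})"
proof (intro equalityI subsetI)
  fix p assume "p \<in> nodes lam"
  then obtain x y where p: "p = (x, y)" "1 \<le> x" "1 \<le> y" "y \<le> part lam x"
    unfolding nodes_def by auto
  then have "x \<le> length lam" using part_beyond_length[of lam x] by (cases "length lam < x") auto
  then show "p \<in> Sigma {1..X} (\<lambda>x. {1..part lam x})" using p assms by auto
qed (auto simp: nodes_def)

lemma finite_nodes: "finite (nodes lam)"
  using nodes_eq_Sigma[of lam "length lam"] by simp

lemma count_residues:
  "count (residues e s lam) a = card {(x, y) \<in> nodes lam. (s + int y - int x) mod int e = a}"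
proof -
  let ?f = "\<lambda>(x, y). (s + int y - int x) mod int e"
  have "count (residues e s lam) a = card (?f -` {a} \<inter> nodes lam)"
    unfolding residues_def count_image_mset using finite_nodes by simp
  also have "?f -` {a} \<inter> nodes lam = {(x, y) \<in> nodes lam. (s + int y - int x) mod int e = a}"
    by auto
  finally show ?thesis .
qed

lemma card_row_residues:
  assumes "T \<le> s - int x"
  shows "int (card {y \<in> {1..part lam x}. (s + int y - int x) mod int e = a})
       = residue_count e T a (beta_num s lam x) - residue_count e T a (s - int x)"
proof -
  let ?f = "\<lambda>y. s + int y - int x"
  have "inj_on ?f {y \<in> {1..part lam x}. (s + int y - int x) mod int e = a}"
    by (simp add: inj_on_def)
  moreover have "?f ` {y \<in> {1..part lam x}. (s + int y - int x) mod int e = a}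
      = {n \<in> {s - int x<..beta_num s lam x}. n mod int e = a}"
  proof (intro equalityI subsetI)
    fix n assume "n \<in> {n \<in> {s - int x<..beta_num s lam x}. n mod int e = a}"
    then show "n \<in> ?f ` {y \<in> {1..part lam x}. (s + int y - int x) mod int e = a}"
      unfolding beta_num_def by (intro image_eqI[where x = "nat (n - s + int x)"]) auto
  qed (auto simp: beta_num_def)
  moreover have "residue_count e T a (beta_num s lam x) - residue_count e T a (s - int x)
      = int (card {n \<in> {s - int x<..beta_num s lam x}. n mod int e = a})"
    using assms beta_num_ge[of s x lam] by (intro residue_count_diff_eq_card) auto
  ultimately show ?thesis by (simp add: card_image[symmetric])
qed

text \<open>Summing row by row, the residue count of each row telescopes between the beta-number of
  the row and its position \<open>s - x\<close> in the empty partition.\<close>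
lemma count_residues_eq_sum:
  assumes p: "is_partition lam" and T: "T \<le> s - int (length lam)"
  shows "int (count (residues e s lam) a)
       = (\<Sum>b \<in> {b \<in> beta_set s lam. T \<le> b}. residue_count e T a b)
         - (\<Sum>m \<in> {T..<s}. residue_count e T a m)"
proof -
  define X where "X = nat (s - T)"
  have X: "length lam \<le> X" using T unfolding X_def by linarith
  have "{(x, y) \<in> nodes lam. (s + int y - int x) mod int e = a}
      = Sigma {1..X} (\<lambda>x. {y \<in> {1..part lam x}. (s + int y - int x) mod int e = a})"
    unfolding nodes_eq_Sigma[OF X] by auto
  then have "int (count (residues e s lam) a)
      = (\<Sum>x \<in> {1..X}. int (card {y \<in> {1..part lam x}. (s + int y - int x) mod int e = a}))"
    unfolding count_residues by (simp add: of_nat_sum)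
  also have "\<dots> = (\<Sum>x \<in> {1..X}. residue_count e T a (beta_num s lam x) - residue_count e T a (s - int x))"
    using card_row_residues unfolding X_def by (intro sum.cong) auto
  also have "\<dots> = (\<Sum>x \<in> {1..X}. residue_count e T a (beta_num s lam x))
      - (\<Sum>x \<in> {1..X}. residue_count e T a (s - int x))"
    by (simp add: sum_subtractf)
  also have "(\<Sum>x \<in> {1..X}. residue_count e T a (beta_num s lam x))
      = (\<Sum>b \<in> {b \<in> beta_set s lam. T \<le> b}. residue_count e T a b)"
    unfolding beta_set_ge_eq_image[OF T] X_def
    by (rule sum.reindex[symmetric, unfolded comp_def]) (rule inj_on_subset[OF inj_on_beta_num[OF p]], auto)
  also have "(\<Sum>x \<in> {1..X}. residue_count e T a (s - int x)) = (\<Sum>m \<in> {T..<s}. residue_count e T a m)"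
    unfolding X_def
    by (rule sum.reindex_bij_witness[where i = "\<lambda>m. nat (s - m)" and j = "\<lambda>x. s - int x"]) auto
  finally show ?thesis .
qed

lemma count_residues_diff_next:
  assumes p: "is_partition lam" and e: "0 < e" and a: "a < e"
    and T: "T mod int e = 0" "T \<le> s - int (length lam)"
  shows "int (count (residues e s lam) (int a)) - int (count (residues e s lam) (int ((a + 1) mod e)))
       = int (card {b \<in> beta_set s lam. T \<le> b \<and> b mod int e = int a})
         - int (card {m \<in> {T..<s}. m mod int e = int a})"
proof -
  define A where "A = {b \<in> beta_set s lam. T \<le> b}"
  have "inj_on (beta_num s lam) {1..nat (s - T)}"
    using inj_on_beta_num[OF p] by (rule inj_on_subset) auto
  then have A: "finite A" "card A = card {T..<s}"
    unfolding A_def beta_set_ge_eq_image[OF T(2)] by (simp_all add: card_image)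
  let ?d = "\<lambda>m. residue_count e T (int a) m - residue_count e T (int ((a + 1) mod e)) m"
  let ?ind = "\<lambda>m. if m mod int e = int a then 1 else 0 :: int"
  let ?c = "if a = e - 1 then 1 else 0 :: int"
  have d: "?d m = ?ind m - ?c" if "T \<le> m" for m
    using residue_count_diff_next[OF e a T(1)] that by simp
  have "int (count (residues e s lam) (int a)) - int (count (residues e s lam) (int ((a + 1) mod e)))
      = (\<Sum>b \<in> A. ?d b) - (\<Sum>m \<in> {T..<s}. ?d m)"
    using count_residues_eq_sum[OF p T(2), of e] unfolding A_def by (simp add: sum_subtractf)
  also have "\<dots> = (\<Sum>b \<in> A. ?ind b) - (\<Sum>m \<in> {T..<s}. ?ind m)"
    using d A by (simp add: A_def sum_subtractf)
  also have "\<dots> = int (card {b \<in> A. b mod int e = int a}) - int (card {m \<in> {T..<s}. m mod int e = int a})"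
    using A(1) by (simp add: sum.If_cases Int_def)
  also have "{b \<in> A. b mod int e = int a} = {b \<in> beta_set s lam. T \<le> b \<and> b mod int e = int a}"
    unfolding A_def by auto
  finally show ?thesis .
qed

lemma residues_Nil: "residues e s [] = {#}"
proof -
  have "nodes [] = {}" unfolding nodes_def part_def by simp
  then show ?thesis unfolding residues_def by simp
qed

lemma eta_t_eq_residues:
  assumes p: "is_partition lam" and e: "0 < e" and a: "a < e"
  shows "eta_t e lam s a = eta_t e [] s a + int (count (residues e s lam) (int a))
           - int (count (residues e s lam) (int ((a + 1) mod e)))"
proof -
  obtain N where "int e * N \<le> s - int (length lam) - int a" using ex_multiple_le[OF e] by blast
  then have N: "int e * N + int a \<le> s - int (length lam)" "int e * N + int a \<le> s - int (length [])"
    by auto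
  have T: "int e * N mod int e = 0" "int e * N \<le> s - int (length lam)" "int e * N \<le> s - int (length [])"
    using N a by auto
  show ?thesis
    using eta_t_eq_card[OF p e a N(1)] eta_t_eq_card[OF is_partition_Nil e a N(2)]
      count_residues_diff_next[OF p e a T(1,2)]
      count_residues_diff_next[OF is_partition_Nil e a T(1,3)]
    unfolding residues_Nil by simp
qed

lemma mresidues_eq_sum:
  "length L = length S \<Longrightarrow> mresidues e (L, S) = (\<Sum>k<length L. residues e (S ! k) (L ! k))"
  unfolding mresidues_def by (simp add: sum_list_sum_nth atLeast0LessThan)

lemma sum_eta_t_eq_mresidues:
  assumes c: "(L, S) \<in> config r" and e: "0 < e" and a: "a < e"
  shows "(\<Sum>k<r. eta_t e (L ! k) (S ! k) a)
       = (\<Sum>k<r. eta_t e [] (S ! k) a) + int (count (mresidues e (L, S)) (int a))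
         - int (count (mresidues e (L, S)) (int ((a + 1) mod e)))"
proof -
  have l: "length L = r" "length S = r" using c unfolding config_def by auto
  have "is_partition (L ! k)" if "k < r" for k using c that l unfolding config_def by auto
  then have "(\<Sum>k<r. eta_t e (L ! k) (S ! k) a)
      = (\<Sum>k<r. eta_t e [] (S ! k) a + int (count (residues e (S ! k) (L ! k)) (int a))
                 - int (count (residues e (S ! k) (L ! k)) (int ((a + 1) mod e))))"
    using eta_t_eq_residues[OF _ e a] by (intro sum.cong) auto
  then show ?thesis
    unfolding mresidues_eq_sum[of L S, unfolded l, OF refl] count_sum l
    by (simp add: sum.distrib sum_subtractf of_nat_sum)
qed

lemma sum_eta_t_eq_of_block_eq:
  assumes "(L, S) \<in> config r" and "(L', S') \<in> config r" and "block_eq e (L, S) (L', S')"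
    and "0 < e" and "a < e"
  shows "(\<Sum>k<r. eta_t e (L ! k) (S ! k) a) = (\<Sum>k<r. eta_t e (L' ! k) (S' ! k) a)"
proof -
  have "S = S'" and "mresidues e (L, S) = mresidues e (L', S')"
    using assms(3) unfolding block_eq_def by auto
  then show ?thesis
    using sum_eta_t_eq_mresidues[OF assms(1,4,5)] sum_eta_t_eq_mresidues[OF assms(2,4,5)] by simp
qed

section \<open>Moving rim hooks\<close>

lemma beta_set_exchange:
  assumes p: "is_partition lam" and b: "b \<in> beta_set s lam" and b': "b' \<notin> beta_set s lam"
  shows "\<exists>lam'. is_partition lam' \<and> beta_set s lam' = insert b' (beta_set s lam - {b})"
proof -
  let ?B = "beta_set s lam"
  let ?B' = "insert b' (beta_set s lam - {b})"
  define N where "N = min (s - int (length lam)) (min b b')"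
  have full: "\<forall>n<N. n \<in> ?B" "\<forall>n<N. n \<in> ?B'"
    using mem_beta_set_below unfolding N_def by fastforce+
  have above: "{c \<in> ?B'. N \<le> c} = insert b' ({c \<in> ?B. N \<le> c} - {b})"
    unfolding N_def by auto
  have fin: "finite {c \<in> ?B. N \<le> c}" "finite {c \<in> ?B'. N \<le> c}"
    unfolding above using finite_beta_set_ge by simp_all
  obtain rho t where rt: "is_partition rho" "?B' = beta_set t rho"
    using beta_set_exists[OF full(2) fin(2)] by blast
  have "b \<in> {c \<in> ?B. N \<le> c}" using b unfolding N_def by auto
  then have "card {c \<in> ?B'. N \<le> c} = card {c \<in> ?B. N \<le> c}"
    unfolding above using fin(1) b' by (simp add: card_Suc_Diff1 del: card_Diff_insert)
  then have "nat (t - N) = nat (s - N)"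
    using card_beta_set_ge(2)[OF rt(1)] card_beta_set_ge(2)[OF p full(1)] full(2) rt(2) by metis
  moreover have "N \<le> t - int (length rho)"
    using card_beta_set_ge(1)[OF rt(1)] full(2) rt(2) by metis
  then have "N \<le> t" "N \<le> s" unfolding N_def by auto
  ultimately have "t = s" by simp
  then show ?thesis using rt by metis
qed

text \<open>\<open>lam'\<close> arises from \<open>lam\<close> by adding an \<open>e\<close>-rim hook: the beta-number \<open>b\<close> moves to \<open>b + e\<close>.\<close>
locale add_rim_hook =
  fixes e :: nat and s b :: int and lam lam' :: "nat list"
  assumes p: "is_partition lam" and p': "is_partition lam'" and e: "0 < e"
    and b: "b \<in> beta_set s lam" and b': "b + int e \<notin> beta_set s lam"
    and beta_set_lam': "beta_set s lam' = insert (b + int e) (beta_set s lam - {b})"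
begin

definition T where "T = min (s - int (length lam)) (min (s - int (length lam')) b)"

lemma T_le: "T \<le> s - int (length lam)" "T \<le> s - int (length lam')" "T \<le> b"
  unfolding T_def by auto

lemma residues_eq: "residues e s lam' = residues e s lam + mset_set {0..<int e}"
proof (rule multiset_eqI)
  fix a
  let ?A = "{x \<in> beta_set s lam. T \<le> x}"
  have above': "{x \<in> beta_set s lam'. T \<le> x} = insert (b + int e) (?A - {b})"
    unfolding beta_set_lam' using T_le e by auto
  have "b \<in> ?A" "b + int e \<notin> ?A - {b}" using b b' T_le by auto
  then have "(\<Sum>x \<in> insert (b + int e) (?A - {b}). residue_count e T a x)
      = residue_count e T a (b + int e) + ((\<Sum>x \<in> ?A. residue_count e T a x) - residue_count e T a b)"
    using finite_beta_set_ge by (simp add: sum_diff1)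
  then have "int (count (residues e s lam') a)
      = int (count (residues e s lam) a) + (if 0 \<le> a \<and> a < int e then 1 else 0)"
    using count_residues_eq_sum[OF p' T_le(2), of e a] count_residues_eq_sum[OF p T_le(1), of e a]
      residue_count_add_modulus[OF e, of T b a] above' T_le by simp
  then show "count (residues e s lam') a = count (residues e s lam + mset_set {0..<int e}) a"
    by (cases "0 \<le> a \<and> a < int e") simp_all
qed

lemma eta_t_eq:
  assumes a: "a < e"
  shows "eta_t e lam' s a = eta_t e lam s a"
proof -
  obtain N where "int e * N \<le> T - int a" using ex_multiple_le[OF e] by blast
  then have N: "int e * N + int a \<le> T" by simp
  let ?D = "\<lambda>B. {x \<in> B. int e * N \<le> x \<and> x mod int e = int a}"
  have fin: "finite (?D (beta_set s lam))"
    using finite_beta_set_ge[of s lam "int e * N"] by (rule finite_subset[rotated]) auto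
  have "card (?D (beta_set s lam')) = card (?D (beta_set s lam))"
  proof (cases "b mod int e = int a")
    case True
    then have "?D (beta_set s lam') = insert (b + int e) (?D (beta_set s lam) - {b})"
      "b \<in> ?D (beta_set s lam)"
      unfolding beta_set_lam' using N T_le b e by auto
    moreover from this(2) have "0 < card (?D (beta_set s lam))" using fin card_gt_0_iff by blast
    ultimately show ?thesis using fin b' by simp
  next
    case False
    then have "?D (beta_set s lam') = ?D (beta_set s lam)" unfolding beta_set_lam' by auto
    then show ?thesis by simp
  qed
  then show ?thesis
    using eta_t_eq_card[OF p e a, of N s] eta_t_eq_card[OF p' e a, of N s] N T_le by simp
qed

end

lemma psize_pos: "is_partition rho \<Longrightarrow> rho \<noteq> [] \<Longrightarrow> 0 < psize rho"
  unfolding psize_def is_partition_def by (cases rho) auto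

lemma e_weight_pos_of_runner_gap:
  assumes p: "is_partition lam" and e: "0 < e" and a: "a < e"
    and c: "int e * (c + 1) + int a \<in> beta_set s lam" "int e * c + int a \<notin> beta_set s lam"
  shows "0 < e_weight e lam s"
proof -
  have "eta_rho e lam s a \<noteq> []"
  proof
    assume "eta_rho e lam s a = []"
    then have R: "runner e (beta_set s lam) a = {n. n < eta_t e lam s a}"
      using eta_spec(2)[OF p e a] beta_set_Nil by simp
    have "c + 1 \<in> runner e (beta_set s lam) a" "c \<notin> runner e (beta_set s lam) a"
      using c mem_runner_iff[OF e a] by auto
    then show False unfolding R by simp
  qed
  then have "0 < psize (eta_rho e lam s a)" using psize_pos eta_spec(1)[OF p e a] by blast
  moreover have "psize (eta_rho e lam s a) \<le> e_weight e lam s"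
    unfolding e_weight_def using a by (intro member_le_sum) auto
  ultimately show ?thesis by simp
qed

lemma (in add_rim_hook) e_weight_pos: "0 < e_weight e lam' s"
proof -
  define a where "a = nat (b mod int e)"
  have a: "a < e" "int a = b mod int e" unfolding a_def using e by (simp_all add: nat_less_iff)
  have "b = int e * (b div int e) + int a" unfolding a(2) by simp
  then have "int e * (b div int e + 1) + int a \<in> beta_set s lam'"
    "int e * (b div int e) + int a \<notin> beta_set s lam'"
    unfolding beta_set_lam' using e by (simp_all add: algebra_simps)
  then show ?thesis using e_weight_pos_of_runner_gap[OF p' e a(1)] by blast
qed

lemma beta_set_last_gap:
  assumes p: "is_partition rho" and ne: "rho \<noteq> []"
  shows "beta_num t rho (length rho) \<in> beta_set t rho"
    and "beta_num t rho (length rho) - 1 \<notin> beta_set t rho"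
proof -
  have l: "1 \<le> length rho" using ne by (cases rho) auto
  then show "beta_num t rho (length rho) \<in> beta_set t rho" unfolding beta_set_eq_image by auto
  have pl: "1 \<le> part rho (length rho)" using part_ge_1[OF p l] by simp
  show "beta_num t rho (length rho) - 1 \<notin> beta_set t rho"
  proof
    assume "beta_num t rho (length rho) - 1 \<in> beta_set t rho"
    then obtain x where x: "1 \<le> x" "beta_num t rho (length rho) - 1 = beta_num t rho x"
      unfolding beta_set_eq_image by auto
    consider "x < length rho" | "x = length rho" | "length rho < x" by linarith
    then show False
    proof cases
      case 1
      then show ?thesis using beta_num_strict_antimono[OF p x(1) 1, of t] x by simp
    next
      case 3
      then show ?thesis
        using beta_num_beyond_length[OF 3, of t] pl x unfolding beta_num_def by linarith
    qed (use x in simp)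
  qed
qed

text \<open>The lowest bead of a nonempty runner partition can slide up one position on its runner.\<close>
lemma ex_removable_rim_hook:
  assumes p: "is_partition lam" and e: "0 < e" and w: "e_weight e lam s \<noteq> 0"
  shows "\<exists>b \<in> beta_set s lam. b - int e \<notin> beta_set s lam"
proof -
  obtain a where a: "a < e" "psize (eta_rho e lam s a) \<noteq> 0"
    using w unfolding e_weight_def by (metis lessThan_iff sum.neutral)
  note spec = eta_spec[OF p e a(1)]
  have ne: "eta_rho e lam s a \<noteq> []" using a(2) unfolding psize_def by auto
  define c where "c = beta_num (eta_t e lam s a) (eta_rho e lam s a) (length (eta_rho e lam s a))"
  have "c \<in> runner e (beta_set s lam) a" "c - 1 \<notin> runner e (beta_set s lam) a"
    using beta_set_last_gap[OF spec(1) ne] spec(2) unfolding c_def by auto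
  then have "int e * c + int a \<in> beta_set s lam" "int e * c + int a - int e \<notin> beta_set s lam"
    using mem_runner_iff[OF e a(1)] by (auto simp: algebra_simps)
  then show ?thesis by blast
qed

lemma ex_remove_rim_hook:
  assumes p: "is_partition lam" and e: "0 < e" and w: "e_weight e lam s \<noteq> 0"
  shows "\<exists>b lam0. add_rim_hook e s b lam0 lam"
proof -
  obtain b where b: "b \<in> beta_set s lam" "b - int e \<notin> beta_set s lam"
    using ex_removable_rim_hook[OF assms] by blast
  obtain lam0 where lam0: "is_partition lam0"
    "beta_set s lam0 = insert (b - int e) (beta_set s lam - {b})"
    using beta_set_exchange[OF p b] by blast
  have "add_rim_hook e s (b - int e) lam0 lam"
    by unfold_locales (use p e b lam0 in auto)
  then show ?thesis by blast
qed

lemma ex_add_rim_hook: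
  assumes p: "is_partition lam" and e: "0 < e"
  shows "\<exists>lam'. add_rim_hook e s (beta_num s lam 1) lam lam'"
proof -
  have b: "beta_num s lam 1 \<in> beta_set s lam" unfolding beta_set_eq_image by auto
  have b': "beta_num s lam 1 + int e \<notin> beta_set s lam" using beta_set_le_first[OF p] e by force
  obtain lam' where "is_partition lam'"
    "beta_set s lam' = insert (beta_num s lam 1 + int e) (beta_set s lam - {beta_num s lam 1})"
    using beta_set_exchange[OF p b b'] by blast
  then have "add_rim_hook e s (beta_num s lam 1) lam lam'"
    by unfold_locales (use p e b b' in auto)
  then show ?thesis by blast
qed

lemma card_nodes: "card (nodes lam) = psize lam"
proof -
  have "card (nodes lam) = (\<Sum>x \<in> {1..length lam}. part lam x)"
    unfolding nodes_eq_Sigma[OF order.refl] by simp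
  also have "\<dots> = (\<Sum>i < length lam. part lam (Suc i))"
    by (rule sum.reindex_bij_witness[where i = Suc and j = "\<lambda>x. x - 1"]) auto
  also have "\<dots> = psize lam"
    unfolding psize_def part_def by (simp add: sum_list_sum_nth atLeast0LessThan)
  finally show ?thesis .
qed

lemma size_residues: "size (residues e s lam) = psize lam"
  unfolding residues_def by (simp add: card_nodes)

lemma size_sum_mset: "size (sum f A) = (\<Sum>a \<in> A. size (f a :: 'b multiset))"
  by (induct A rule: infinite_finite_induct) simp_all

lemma mpsize_eq_size_mresidues:
  assumes "length L = length S"
  shows "mpsize L = size (mresidues e (L, S))"
  unfolding mresidues_eq_sum[OF assms] size_sum_mset size_residues mpsize_def
  by (simp add: sum_list_sum_nth atLeast0LessThan)

lemma mresidues_list_update: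
  assumes "length L = length S" and "j < length L"
  shows "mresidues e (L[j := lam], S) + residues e (S ! j) (L ! j)
       = mresidues e (L, S) + residues e (S ! j) lam"
proof -
  let ?rest = "\<Sum>k \<in> {..<length L} - {j}. residues e (S ! k) (L ! k)"
  have "(\<Sum>k \<in> {..<length L} - {j}. residues e (S ! k) (L[j := lam] ! k)) = ?rest"
    by (rule sum.cong) auto
  then have "mresidues e (L[j := lam], S) = residues e (S ! j) lam + ?rest"
    using assms mresidues_eq_sum[of "L[j := lam]" S e] by (simp add: sum.remove[of _ j])
  moreover have "mresidues e (L, S) = residues e (S ! j) (L ! j) + ?rest"
    using assms mresidues_eq_sum[of L S e] by (simp add: sum.remove[of _ j])
  ultimately show ?thesis by (simp add: add_ac)
qed

text \<open>Each \<open>e\<close>-rim hook contains every residue exactly once.\<close>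
lemma block_eq_move_rim_hook:
  assumes c: "(L, S) \<in> config r" and be: "block_eq e c0 (L, S)"
    and jk: "j < r" "k < r" "j \<noteq> k"
    and hj: "add_rim_hook e (S ! j) bj lj (L ! j)" and hk: "add_rim_hook e (S ! k) bk (L ! k) lk"
  shows "(L[j := lj, k := lk], S) \<in> config r" and "block_eq e c0 (L[j := lj, k := lk], S)"
proof -
  have l: "length L = r" "length S = r" using c unfolding config_def by auto
  let ?U = "mset_set {0..<int e}"
  have "is_partition lj" "is_partition lk"
    using add_rim_hook.p[OF hj] add_rim_hook.p'[OF hk] .
  then show cfg: "(L[j := lj, k := lk], S) \<in> config r"
    using c unfolding config_def by (auto dest!: set_update_subset_insert[THEN subsetD])
  have "mresidues e (L[j := lj], S) + residues e (S ! j) lj + ?U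
      = mresidues e (L, S) + residues e (S ! j) lj"
    using mresidues_list_update[of L S j e lj] add_rim_hook.residues_eq[OF hj] l jk
    by (simp add: add_ac)
  then have M1: "mresidues e (L[j := lj], S) + ?U = mresidues e (L, S)"
    by (simp add: add_ac)
  have "mresidues e (L[j := lj, k := lk], S) + residues e (S ! k) (L ! k)
      = mresidues e (L[j := lj], S) + residues e (S ! k) (L ! k) + ?U"
    using mresidues_list_update[of "L[j := lj]" S k e lk] add_rim_hook.residues_eq[OF hk] l jk
    by (simp add: add_ac)
  then have M: "mresidues e (L[j := lj, k := lk], S) = mresidues e (L, S)"
    using M1 by (simp add: add_ac)
  moreover have "mpsize (L[j := lj, k := lk]) = mpsize L"
    using mpsize_eq_size_mresidues[of _ S e] M l by simp
  ultimately show "block_eq e c0 (L[j := lj, k := lk], S)"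
    using be unfolding block_eq_def by simp
qed

lemma rouquier_block_component_diff_nonneg:
  assumes rb: "rouquier_block e r R" and c: "(L, S) \<in> R" and k: "k < r"
    and w: "e_weight e (L ! k) (S ! k) \<noteq> 0" and i: "i + 1 < e"
  shows "0 \<le> eta_t e (L ! k) (S ! k) (i + 1) - eta_t e (L ! k) (S ! k) i"
proof -
  have "length L = r" using rb c unfolding rouquier_block_def is_block_def config_def by auto
  then have "rouquier_partition e (L ! k) (S ! k)"
    using rb c k unfolding rouquier_block_def rouquier_multipartition_def by auto
  then show ?thesis using w i unfolding rouquier_partition_def by force
qed

text \<open>An \<open>e\<close>-rim hook moved from component \<open>j\<close> onto the first row of component \<open>k\<close> gives it
  positive weight without changing its runner charges, so the Rouquier condition applies to it.\<close>
lemma rouquier_block_diff_nonneg: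
  assumes rb: "rouquier_block e r R" and c: "(L, S) \<in> R" and j: "j < r"
    and w: "e_weight e (L ! j) (S ! j) \<noteq> 0" and e: "0 < e" and i: "i + 1 < e" and k: "k < r"
  shows "0 \<le> eta_t e (L ! k) (S ! k) (i + 1) - eta_t e (L ! k) (S ! k) i"
proof (cases "k = j")
  case False
  obtain c0 where R: "R = {c \<in> config r. block_eq e c0 c}"
    using rb unfolding rouquier_block_def is_block_def by blast
  then have cfg: "(L, S) \<in> config r" "block_eq e c0 (L, S)" using c by auto
  then have l: "length L = r" and "\<And>m. m < r \<Longrightarrow> is_partition (L ! m)"
    unfolding config_def by auto
  then obtain bj lj lk where hj: "add_rim_hook e (S ! j) bj lj (L ! j)"
    and hk: "add_rim_hook e (S ! k) (beta_num (S ! k) (L ! k) 1) (L ! k) lk"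
    using ex_remove_rim_hook[OF _ e w] ex_add_rim_hook[OF _ e] j k by metis
  let ?L = "L[j := lj, k := lk]"
  have "(?L, S) \<in> R" using block_eq_move_rim_hook[OF cfg j k False[symmetric] hj hk] R by simp
  moreover have "?L ! k = lk" using k l by simp
  ultimately have "0 \<le> eta_t e lk (S ! k) (i + 1) - eta_t e lk (S ! k) i"
    using rouquier_block_component_diff_nonneg[OF rb _ k _ i] add_rim_hook.e_weight_pos[OF hk]
    by (metis less_not_refl)
  then show ?thesis using add_rim_hook.eta_t_eq[OF hk] i by simp
qed (use rouquier_block_component_diff_nonneg[OF rb c k _ i] w in simp)

theorem lemma3p17:
  fixes e r :: nat and R :: "(nat list list \<times> int list) set"
    and L :: "nat list list" and S :: "int list"
  assumes "e \<ge> 2" and "r \<ge> 1"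
    and "rouquier_block e r R" and "\<not> core_block e r R"
    and "(L, S) \<in> R"
  shows "\<forall>i. i + 1 < e \<longrightarrow>
           (\<Sum>k<r. eta_t e (L ! k) (S ! k) (i + 1)) - (\<Sum>k<r. eta_t e (L ! k) (S ! k) i) \<ge> 0"
proof (intro allI impI)
  fix i assume i: "i + 1 < e"
  have e: "0 < e" using assms(1) by simp
  obtain c0 where R: "R = {c \<in> config r. block_eq e c0 c}"
    using assms(3) unfolding rouquier_block_def is_block_def by blast
  obtain L' S' j where c': "(L', S') \<in> R" and j: "j < r" and w: "e_weight e (L' ! j) (S' ! j) \<noteq> 0"
    using assms(3,4) R unfolding rouquier_block_def core_block_def config_def by fastforce
  have "block_eq e (L, S) (L', S')" using assms(5) c' R unfolding block_eq_def by auto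
  then have "(\<Sum>k<r. eta_t e (L ! k) (S ! k) a) = (\<Sum>k<r. eta_t e (L' ! k) (S' ! k) a)" if "a < e" for a
    using sum_eta_t_eq_of_block_eq[of L S r L' S' e a] assms(5) c' R e that by auto
  then have "(\<Sum>k<r. eta_t e (L ! k) (S ! k) (i + 1)) - (\<Sum>k<r. eta_t e (L ! k) (S ! k) i)
      = (\<Sum>k<r. eta_t e (L' ! k) (S' ! k) (i + 1) - eta_t e (L' ! k) (S' ! k) i)"
    using i by (simp add: sum_subtractf)
  also have "\<dots> \<ge> 0"
    using rouquier_block_diff_nonneg[OF assms(3) c' j w e i] by (intro sum_nonneg) auto
  finally show "(\<Sum>k<r. eta_t e (L ! k) (S ! k) (i + 1)) - (\<Sum>k<r. eta_t e (L ! k) (S ! k) i) \<ge> 0" .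
qed

end
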